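(* Let $m\ge 2$ and $n\ge 2$ be integers. The number $D_F(m,n)$ of maximal antichains of $[m]^n$ is at least the number $D_E(m,n-1)$ of antichains (the empty set included) of $[m]^{n-1}$: $D_F(m,n)\ge D_E(m,n-1)$.
   Context: $[m]=\{1,\dots,m\}$ with its natural order; $[m]^k$ carries the componentwise (product) order. An antichain is a set of pairwise incomparable elements; it is maximal if no further element of the poset can be added while remaining an antichain. *)

theory Defs
  imports Main
begin

definition grid :: "nat \<Rightarrow> nat \<Rightarrow> nat list set" where
  "grid m k = {xs. length xs = k \<and> set xs \<subseteq> {1..m}}"

definition leq_prod :: "nat list \<Rightarrow> nat list \<Rightarrow> bool" where
  "leq_prod xs ys \<longleftrightarrow> list_all2 (\<le>) xs ys"

definition comparable :: "nat list \<Rightarrow> nat list \<Rightarrow> bool" where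
  "comparable xs ys \<longleftrightarrow> leq_prod xs ys \<or> leq_prod ys xs"

definition is_antichain :: "nat \<Rightarrow> nat \<Rightarrow> nat list set \<Rightarrow> bool" where
  "is_antichain m k A \<longleftrightarrow> A \<subseteq> grid m k \<and>
     (\<forall>x\<in>A. \<forall>y\<in>A. x \<noteq> y \<longrightarrow> \<not> comparable x y)"

definition is_max_antichain :: "nat \<Rightarrow> nat \<Rightarrow> nat list set \<Rightarrow> bool" where
  "is_max_antichain m k A \<longleftrightarrow> is_antichain m k A \<and>
     (\<forall>z\<in>grid m k. z \<notin> A \<longrightarrow> \<not> is_antichain m k (insert z A))"

definition D_E :: "nat \<Rightarrow> nat \<Rightarrow> nat" where
  "D_E m k = card {A. is_antichain m k A}"

definition D_F :: "nat \<Rightarrow> nat \<Rightarrow> nat" where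
  "D_F m k = card {A. is_max_antichain m k A}"

end

theory Submission
  imports Defs
begin

text \<open>An antichain \<open>A\<close> of \<open>[m]\<^sup>k\<close> is lifted to the maximal antichain of \<open>[m]\<^sup>k\<^sup>+\<^sup>1\<close>
consisting of the points \<open>(a, m)\<close> for \<open>a \<in> A\<close> and \<open>(b, 1)\<close> for the minimal points \<open>b\<close> of the
set \<open>U\<close> of points lying below no element of \<open>A\<close>. A point \<open>(x, t)\<close> is comparable to \<open>(a, m)\<close>
whenever \<open>x \<le> a\<close> for some \<open>a \<in> A\<close>, and otherwise \<open>x \<in> U\<close> lies above some minimal \<open>b\<close>, so that
\<open>(b, 1) \<le> (x, t)\<close>; this gives maximality. Since \<open>m \<noteq> 1\<close>, \<open>A\<close> is recovered from the top layer,
so the lifting is injective.\<close>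

lemma leq_prod_sum_list_le: "leq_prod xs ys \<Longrightarrow> sum_list xs \<le> sum_list ys"
  unfolding leq_prod_def by (induction rule: list_all2_induct) (simp_all add: add_mono)

lemma leq_prod_sum_list_less:
  "leq_prod xs ys \<Longrightarrow> xs \<noteq> ys \<Longrightarrow> sum_list xs < sum_list ys"
  unfolding leq_prod_def
proof (induction rule: list_all2_induct)
  case (Cons x xs y ys)
  then have "sum_list xs \<le> sum_list ys"
    using leq_prod_sum_list_le unfolding leq_prod_def by blast
  with Cons show ?case by (cases "xs = ys") auto
qed simp

lemma leq_prod_refl: "leq_prod xs xs"
  unfolding leq_prod_def by (simp add: list_all2_refl)

lemma leq_prod_trans: "leq_prod xs ys \<Longrightarrow> leq_prod ys zs \<Longrightarrow> leq_prod xs zs"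
  unfolding leq_prod_def
  by (rule list_all2_trans[of "(\<le>)" "(\<le>)" "(\<le>)"]) (erule (1) order_trans)+

lemma leq_prod_snoc [simp]: "leq_prod (xs @ [s]) (ys @ [t]) \<longleftrightarrow> leq_prod xs ys \<and> s \<le> t"
proof (cases "length xs = length ys")
  case False
  then show ?thesis unfolding leq_prod_def by (auto dest: list_all2_lengthD)
qed (simp add: leq_prod_def list_all2_append)

lemma comparable_sym: "comparable xs ys \<longleftrightarrow> comparable ys xs"
  unfolding comparable_def by blast

lemma finite_grid: "finite (grid m k)"
proof -
  have "grid m k = {xs. set xs \<subseteq> {1..m} \<and> length xs = k}"
    unfolding grid_def by auto
  then show ?thesis using finite_lists_length_eq[of "{1..m}" k] by simp
qed

lemma snoc_in_grid_Suc [simp]: "xs @ [t] \<in> grid m (Suc k) \<longleftrightarrow> xs \<in> grid m k \<and> t \<in> {1..m}"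
  unfolding grid_def by auto

lemma grid_Suc_cases:
  assumes "z \<in> grid m (Suc k)"
  obtains xs t where "z = xs @ [t]" "xs \<in> grid m k" "t \<in> {1..m}"
  using assms unfolding grid_def by (cases z rule: rev_cases) auto

definition minimals :: "nat list set \<Rightarrow> nat list set" where
  "minimals S = {b \<in> S. \<forall>c\<in>S. leq_prod c b \<longrightarrow> c = b}"

lemma minimals_subset: "minimals S \<subseteq> S"
  unfolding minimals_def by blast

text \<open>The sum of the entries strictly increases along the product order, so a point of \<open>S\<close>
below \<open>x\<close> with least sum is minimal.\<close>

lemma exists_minimals_below:
  assumes "x \<in> S"
  shows "\<exists>b\<in>minimals S. leq_prod b x"
proof -
  obtain b where b: "b \<in> S" "leq_prod b x"
    and least: "\<And>c. c \<in> S \<and> leq_prod c x \<Longrightarrow> sum_list b \<le> sum_list c"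
    using ex_has_least_nat[of "\<lambda>b. b \<in> S \<and> leq_prod b x" x sum_list] assms leq_prod_refl
    by blast
  have "c = b" if "c \<in> S" "leq_prod c b" for c
  proof (rule ccontr)
    assume "c \<noteq> b"
    then have "sum_list c < sum_list b" using leq_prod_sum_list_less that(2) by blast
    moreover have "leq_prod c x" using leq_prod_trans that(2) b(2) by blast
    ultimately show False using least[of c] that(1) by linarith
  qed
  then show ?thesis using b unfolding minimals_def by blast
qed

definition lift_antichain :: "nat \<Rightarrow> nat \<Rightarrow> nat list set \<Rightarrow> nat list set" where
  "lift_antichain m k A =
     (\<lambda>a. a @ [m]) ` A \<union>
     (\<lambda>b. b @ [1]) ` minimals {x \<in> grid m k. \<forall>a\<in>A. \<not> leq_prod x a}"

lemma inj_lift_antichain: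
  assumes "m \<noteq> 1"
  shows "inj (lift_antichain m k)"
proof (rule injI)
  fix A B assume eq: "lift_antichain m k A = lift_antichain m k B"
  have "A = {a. a @ [m] \<in> lift_antichain m k A}" for A
    unfolding lift_antichain_def using assms by auto
  then show "A = B" using eq by metis
qed

lemma is_antichain_lift_antichain:
  assumes "m \<ge> 2" and "is_antichain m k A"
  shows "is_antichain m (Suc k) (lift_antichain m k A)"
proof -
  let ?U = "{x \<in> grid m k. \<forall>a\<in>A. \<not> leq_prod x a}"
  have top: "\<not> comparable (a @ [m]) (a' @ [m])" if "a \<in> A" "a' \<in> A" "a \<noteq> a'" for a a'
    using assms(2) that unfolding is_antichain_def comparable_def by auto
  have mixed: "\<not> comparable (a @ [m]) (b @ [1])" if "a \<in> A" "b \<in> minimals ?U" for a b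
    using assms(1) that minimals_subset unfolding comparable_def by fastforce
  have bottom: "\<not> comparable (b @ [1]) (b' @ [1])"
    if "b \<in> minimals ?U" "b' \<in> minimals ?U" "b \<noteq> b'" for b b'
    using that unfolding minimals_def comparable_def by auto
  have "A \<subseteq> grid m k" "minimals ?U \<subseteq> grid m k"
    using assms(2) minimals_subset unfolding is_antichain_def by blast+
  then have "lift_antichain m k A \<subseteq> grid m (Suc k)"
    using assms(1) unfolding lift_antichain_def by auto
  moreover have "\<forall>x\<in>lift_antichain m k A. \<forall>y\<in>lift_antichain m k A. x \<noteq> y \<longrightarrow> \<not> comparable x y"
    unfolding lift_antichain_def ball_Un Ball_image_comp comp_def
    using top mixed bottom comparable_sym by blast
  ultimately show ?thesis unfolding is_antichain_def by blast
qed

lemma comparable_not_is_antichain: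
  assumes "x \<in> A" "y \<in> A" "x \<noteq> y" "comparable x y"
  shows "\<not> is_antichain m k A"
  using assms unfolding is_antichain_def by blast

lemma lift_antichain_maximal:
  assumes "z \<in> grid m (Suc k)" and "z \<notin> lift_antichain m k A"
  shows "\<not> is_antichain m (Suc k) (insert z (lift_antichain m k A))"
proof -
  let ?U = "{x \<in> grid m k. \<forall>a\<in>A. \<not> leq_prod x a}"
  obtain x t where z: "z = x @ [t]" and x: "x \<in> grid m k" and t: "t \<in> {1..m}"
    using assms(1) by (rule grid_Suc_cases)
  obtain w where w: "w \<in> lift_antichain m k A" "comparable z w"
  proof (cases "\<exists>a\<in>A. leq_prod x a")
    case True
    then obtain a where a: "a \<in> A" "leq_prod x a" by blast
    have "a @ [m] \<in> lift_antichain m k A"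
      using a(1) unfolding lift_antichain_def by blast
    moreover have "leq_prod z (a @ [m])"
      using z t a(2) by simp
    ultimately show ?thesis using that unfolding comparable_def by blast
  next
    case False
    then have "x \<in> ?U" using x by blast
    then obtain b where b: "b \<in> minimals ?U" "leq_prod b x"
      using exists_minimals_below[of x ?U] by blast
    have "b @ [1] \<in> lift_antichain m k A"
      using b(1) unfolding lift_antichain_def by blast
    moreover have "leq_prod (b @ [1]) z"
      using z t b(2) by simp
    ultimately show ?thesis using that unfolding comparable_def by blast
  qed
  moreover have "z \<noteq> w" using w(1) assms(2) by blast
  ultimately show ?thesis by (intro comparable_not_is_antichain[of z _ w]) auto
qed

lemma is_max_antichain_lift_antichain:
  assumes "m \<ge> 2" and "is_antichain m k A"
  shows "is_max_antichain m (Suc k) (lift_antichain m k A)"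
  using is_antichain_lift_antichain[OF assms] lift_antichain_maximal
  unfolding is_max_antichain_def by blast

lemma finite_max_antichains: "finite {A. is_max_antichain m k A}"
proof (rule finite_subset)
  show "{A. is_max_antichain m k A} \<subseteq> Pow (grid m k)"
    unfolding is_max_antichain_def is_antichain_def by auto
qed (simp add: finite_grid)

lemma D_E_le_D_F_Suc:
  assumes "m \<ge> 2"
  shows "D_E m k \<le> D_F m (Suc k)"
proof -
  have "inj_on (lift_antichain m k) {A. is_antichain m k A}"
    using inj_lift_antichain[of m k] assms by (simp add: inj_on_subset[of _ UNIV])
  moreover have "lift_antichain m k ` {A. is_antichain m k A} \<subseteq> {A. is_max_antichain m (Suc k) A}"
    using is_max_antichain_lift_antichain assms by blast
  ultimately show ?thesis
    unfolding D_E_def D_F_def by (rule card_inj_on_le) (rule finite_max_antichains)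
qed

theorem proposition5:
  fixes m n :: nat
  assumes "m \<ge> 2" and "n \<ge> 2"
  shows "D_F m n \<ge> D_E m (n - 1)"
proof -
  have "n = Suc (n - 1)" using assms(2) by simp
  then show ?thesis using D_E_le_D_F_Suc[OF assms(1), of "n - 1"] by simp
qed

end
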